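(* Let $G$, $k$, $\epsilon$, $M$ be as in the standing setting. Then $G$ contains none of the following configurations: (C1) a vertex $u$ with $d(u)\le 1$; (C2) a path $w_1u_1u_2w_2$ with $d(u_1)=d(u_2)=2$, $d(w_1)\le k-1$ and $d(w_2)\le k-2$; (C3) a vertex $u$ with $3\le d(u)\le M$ whose neighbors are $v_1,\dots,v_{d(u)-2},x,y$, where each $v_i$ has degree $2$ and its other neighbor $w_i$ satisfies $d(w_i)\le M$ (the $w_i$ need not be distinct from each other or from $x,y$), and $d(x)+d(y)\le k-M+2$.
   Context: Standing setting: let $0<\epsilon\le 1/20$, $M=6/\epsilon$, and let $k$ be an integer with $k\ge 3/\epsilon^2$ (so $k\ge 3M$). Let $G$ be a finite simple graph with $\Delta(G)\le k$ such that the square of $G$ is not list $(k+1)$-colorable, while the square of every proper subgraph of $G$ is list $(k+1)$-colorable. Here the square of a graph has the same vertex set, two distinct vertices being adjacent iff they are adjacent or have a common neighbor; it is list $(k+1)$-colorable if for every assignment of lists of $k+1$ colors to the vertices there is a proper coloring of the square from the lists. $d(v)$ denotes the degree of $v$ in $G$. *)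

theory Defs
  imports Complex_Main
begin

definition simple_graph :: "'a set \<Rightarrow> 'a set set \<Rightarrow> bool" where
  "simple_graph V E \<longleftrightarrow> finite V \<and>
     (\<forall>e\<in>E. \<exists>u v. e = {u, v} \<and> u \<noteq> v \<and> u \<in> V \<and> v \<in> V)"

definition nbrs :: "'a set set \<Rightarrow> 'a \<Rightarrow> 'a set" where
  "nbrs E v = {u. {u, v} \<in> E}"

definition deg :: "'a set set \<Rightarrow> 'a \<Rightarrow> nat" where
  "deg E v = card (nbrs E v)"

definition sq_adj :: "'a set \<Rightarrow> 'a set set \<Rightarrow> 'a \<Rightarrow> 'a \<Rightarrow> bool" where
  "sq_adj V E u v \<longleftrightarrow> u \<in> V \<and> v \<in> V \<and> u \<noteq> v \<and>
     ({u, v} \<in> E \<or> (\<exists>w. {u, w} \<in> E \<and> {w, v} \<in> E))"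

definition sq_list_colorable :: "'a set \<Rightarrow> 'a set set \<Rightarrow> nat \<Rightarrow> bool" where
  "sq_list_colorable V E n \<longleftrightarrow>
     (\<forall>L :: 'a \<Rightarrow> nat set. (\<forall>v\<in>V. finite (L v) \<and> card (L v) = n) \<longrightarrow>
        (\<exists>c. (\<forall>v\<in>V. c v \<in> L v) \<and> (\<forall>u v. sq_adj V E u v \<longrightarrow> c u \<noteq> c v)))"

definition proper_subgraph :: "'a set \<Rightarrow> 'a set set \<Rightarrow> 'a set \<Rightarrow> 'a set set \<Rightarrow> bool" where
  "proper_subgraph V' E' V E \<longleftrightarrow> V' \<subseteq> V \<and> E' \<subseteq> E \<and> (\<forall>e\<in>E'. e \<subseteq> V') \<and> (V', E') \<noteq> (V, E)"

end

theory Submission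
  imports Defs
begin

text \<open>All three configurations are reducible. Delete a suitable set S of vertices: by minimality
the square of G - S has a colouring from any lists of size k + 1, and it is a colouring of the
square of G restricted to V - S as long as no vertex of S is the only common neighbour of two
remaining vertices. Then colour the deleted vertices (and, for C3, the centre u) greedily, each
of them seeing at most k coloured vertices in the square.\<close>

definition list_assignment :: "'a set \<Rightarrow> ('a \<Rightarrow> nat set) \<Rightarrow> nat \<Rightarrow> bool" where
  "list_assignment V L n \<longleftrightarrow> (\<forall>v\<in>V. finite (L v) \<and> card (L v) = n)"

definition sq_coloring_on ::
    "'a set \<Rightarrow> 'a set set \<Rightarrow> ('a \<Rightarrow> nat set) \<Rightarrow> 'a set \<Rightarrow> ('a \<Rightarrow> nat) \<Rightarrow> bool" where
  "sq_coloring_on V E L A c \<longleftrightarrow>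
     (\<forall>v\<in>A. c v \<in> L v) \<and> (\<forall>a\<in>A. \<forall>b\<in>A. sq_adj V E a b \<longrightarrow> c a \<noteq> c b)"

lemma sq_list_colorableI:
  assumes "\<And>L. list_assignment V L n \<Longrightarrow> \<exists>c. sq_coloring_on V E L V c"
  shows "sq_list_colorable V E n"
  unfolding sq_list_colorable_def
proof (intro allI impI)
  fix L :: "'a \<Rightarrow> nat set"
  assume "\<forall>v\<in>V. finite (L v) \<and> card (L v) = n"
  then obtain c where "sq_coloring_on V E L V c"
    using assms unfolding list_assignment_def by blast
  moreover have "\<And>u v. sq_adj V E u v \<Longrightarrow> u \<in> V \<and> v \<in> V"
    unfolding sq_adj_def by blast
  ultimately show "\<exists>c. (\<forall>v\<in>V. c v \<in> L v) \<and> (\<forall>u v. sq_adj V E u v \<longrightarrow> c u \<noteq> c v)"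
    unfolding sq_coloring_on_def by blast
qed

lemma simple_graph_edgeD:
  assumes "simple_graph V E" "{a, b} \<in> E"
  shows "a \<in> V" "b \<in> V" "a \<noteq> b"
  using assms unfolding simple_graph_def by (auto simp: doubleton_eq_iff)

lemma mem_nbrs_iff: "a \<in> nbrs E b \<longleftrightarrow> {a, b} \<in> E"
  by (simp add: nbrs_def)

lemma nbrs_commute: "a \<in> nbrs E b \<longleftrightarrow> b \<in> nbrs E a"
  by (simp add: nbrs_def insert_commute)

lemma sq_adj_commute: "sq_adj V E a b \<longleftrightarrow> sq_adj V E b a"
  unfolding sq_adj_def by (auto simp: insert_commute)

lemma nbrs_subset: "simple_graph V E \<Longrightarrow> nbrs E v \<subseteq> V"
  unfolding nbrs_def using simple_graph_edgeD by fastforce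

lemma finite_nbrs: "simple_graph V E \<Longrightarrow> finite (nbrs E v)"
  using nbrs_subset finite_subset unfolding simple_graph_def by metis

lemma nbrs_eq_doubleton:
  assumes "simple_graph V E" "deg E v = 2" "a \<in> nbrs E v" "b \<in> nbrs E v" "a \<noteq> b"
  shows "nbrs E v = {a, b}"
proof -
  have "{a, b} \<subseteq> nbrs E v"
    using assms(3,4) by blast
  moreover have "card {a, b} = card (nbrs E v)"
    using assms(2,5) by (simp add: deg_def)
  ultimately show ?thesis
    using card_seteq[OF finite_nbrs[OF assms(1)]] by (metis order_refl)
qed

subsection \<open>Counting neighbours in the square\<close>

lemma card_sq_nbrs_le_sum:
  assumes "simple_graph V E"
  shows "card {z\<in>A. sq_adj V E s z} \<le> (\<Sum>w\<in>nbrs E s. card (insert w (nbrs E w - {s}) \<inter> A))"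
proof -
  have "{z\<in>A. sq_adj V E s z} \<subseteq> (\<Union>w\<in>nbrs E s. insert w (nbrs E w - {s}) \<inter> A)"
    unfolding sq_adj_def nbrs_def by (auto simp: insert_commute)
  then have "card {z\<in>A. sq_adj V E s z} \<le> card (\<Union>w\<in>nbrs E s. insert w (nbrs E w - {s}) \<inter> A)"
    using finite_nbrs[OF assms] by (intro card_mono) auto
  also have "\<dots> \<le> (\<Sum>w\<in>nbrs E s. card (insert w (nbrs E w - {s}) \<inter> A))"
    using finite_nbrs[OF assms] by (rule card_UN_le)
  finally show ?thesis .
qed

lemma card_insert_nbrs_le_deg:
  assumes "simple_graph V E" "s \<in> nbrs E w"
  shows "card (insert w (nbrs E w - {s}) \<inter> A) \<le> deg E w"
    and "w \<notin> A \<Longrightarrow> card (insert w (nbrs E w - {s}) \<inter> A) \<le> deg E w - 1"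
proof -
  have fin: "finite (nbrs E w)"
    using finite_nbrs[OF assms(1)] .
  have card_rest: "card (nbrs E w - {s}) = deg E w - 1"
    using assms(2) fin by (simp add: deg_def)
  have "card (insert w (nbrs E w - {s}) \<inter> A) \<le> card (insert w (nbrs E w - {s}))"
    using fin by (intro card_mono) auto
  also have "\<dots> \<le> Suc (deg E w - 1)"
    using fin card_rest by (simp add: card_insert_if)
  also have "\<dots> = deg E w"
    using assms(2) fin card_gt_0_iff[of "nbrs E w"] unfolding deg_def by auto
  finally show "card (insert w (nbrs E w - {s}) \<inter> A) \<le> deg E w" .
  assume "w \<notin> A"
  then have "card (insert w (nbrs E w - {s}) \<inter> A) \<le> card (nbrs E w - {s})"
    using fin by (intro card_mono) auto
  then show "card (insert w (nbrs E w - {s}) \<inter> A) \<le> deg E w - 1"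
    using card_rest by simp
qed

lemma card_sq_nbrs_le_sum_deg:
  assumes "simple_graph V E"
  shows "card {z\<in>A. sq_adj V E s z} \<le> (\<Sum>w\<in>nbrs E s. deg E w)"
proof -
  have "card (insert w (nbrs E w - {s}) \<inter> A) \<le> deg E w" if "w \<in> nbrs E s" for w
    using that by (intro card_insert_nbrs_le_deg(1)[OF assms]) (simp add: nbrs_commute)
  then show ?thesis
    by (rule order_trans[OF card_sq_nbrs_le_sum[OF assms] sum_mono])
qed

lemma card_sq_nbrs_le_deg_mult:
  assumes "simple_graph V E" and nbrs_deg: "\<forall>w\<in>nbrs E s. real (deg E w) \<le> M"
  shows "real (card {z\<in>A. sq_adj V E s z}) \<le> real (deg E s) * M"
proof -
  have "real (card {z\<in>A. sq_adj V E s z}) \<le> (\<Sum>w\<in>nbrs E s. real (deg E w))"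
    using card_sq_nbrs_le_sum_deg[OF assms(1)] by (metis of_nat_le_iff of_nat_sum)
  also have "\<dots> \<le> real (card (nbrs E s)) * M"
    by (rule sum_bounded_above) (use nbrs_deg in blast)
  finally show ?thesis
    by (simp add: deg_def)
qed

subsection \<open>Extending and restricting colourings of the square\<close>

lemma sq_coloring_on_insert:
  assumes G: "simple_graph V E" and L: "list_assignment V L (k + 1)" and "s \<in> V"
    and c: "sq_coloring_on V E L A c"
    and few: "card {z\<in>A. sq_adj V E s z} \<le> k"
  shows "\<exists>c'. sq_coloring_on V E L (insert s A) c'"
proof -
  define used where "used = c ` {z\<in>A. sq_adj V E s z}"
  have fin: "finite {z\<in>A. sq_adj V E s z}"
    using G unfolding simple_graph_def sq_adj_def by (auto intro: finite_subset)
  have card_L: "card (L s) = k + 1"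
    using L \<open>s \<in> V\<close> unfolding list_assignment_def by auto
  have card_used: "card used \<le> k"
    using card_image_le[OF fin, of c] few unfolding used_def by linarith
  have "\<not> L s \<subseteq> used"
  proof
    assume "L s \<subseteq> used"
    then have "card (L s) \<le> card used"
      using fin unfolding used_def by (intro card_mono) auto
    then show False
      using card_L card_used by linarith
  qed
  then obtain col where col: "col \<in> L s" "col \<notin> used"
    by blast
  have "sq_coloring_on V E L (insert s A) (c(s := col))"
    unfolding sq_coloring_on_def
  proof (intro conjI ballI impI)
    fix v assume "v \<in> insert s A"
    then show "(c(s := col)) v \<in> L v"
      using c col unfolding sq_coloring_on_def by auto
  next
    fix a b assume a: "a \<in> insert s A" and b: "b \<in> insert s A" and ab: "sq_adj V E a b"
    have fresh: "c z \<noteq> col" if "z \<in> A" "sq_adj V E s z" for z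
      using that col(2) unfolding used_def by auto
    have "a \<noteq> b"
      using ab unfolding sq_adj_def by auto
    then consider "a = s" "b \<in> A" "b \<noteq> s" | "b = s" "a \<in> A" "a \<noteq> s" | "a \<in> A" "b \<in> A" "a \<noteq> s" "b \<noteq> s"
      using a b by blast
    then show "(c(s := col)) a \<noteq> (c(s := col)) b"
    proof cases
      case 1
      then show ?thesis using fresh[of b] ab by auto
    next
      case 2
      then show ?thesis using fresh[of a] ab sq_adj_commute[of V E a b] by auto
    next
      case 3
      then show ?thesis using c ab unfolding sq_coloring_on_def by auto
    qed
  qed
  then show ?thesis by blast
qed

lemma sq_coloring_on_Un:
  assumes G: "simple_graph V E" and L: "list_assignment V L (k + 1)"
    and B: "B \<subseteq> V" "\<forall>s\<in>B. card {z\<in>V. sq_adj V E s z} \<le> k"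
    and c: "A \<subseteq> V" "sq_coloring_on V E L A c"
  shows "\<exists>c'. sq_coloring_on V E L (A \<union> B) c'"
proof -
  have "finite B"
    using B(1) G finite_subset unfolding simple_graph_def by blast
  then show ?thesis
    using B
  proof (induction B rule: finite_induct)
    case empty
    then show ?case using c by auto
  next
    case (insert s B)
    then obtain c' where c': "sq_coloring_on V E L (A \<union> B) c'"
      by auto
    have "card {z\<in>A \<union> B. sq_adj V E s z} \<le> card {z\<in>V. sq_adj V E s z}"
      using G c(1) insert.prems unfolding simple_graph_def by (intro card_mono) auto
    then have "card {z\<in>A \<union> B. sq_adj V E s z} \<le> k"
      using insert.prems by simp
    then show ?case
      using sq_coloring_on_insert[OF G L _ c'] insert.prems by simp
  qed
qed

text \<open>A vertex of S can only join two vertices of A in the square of G if it is their unique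
common neighbour, so the last hypothesis makes the square of G - S agree with that of G on A.\<close>

lemma sq_coloring_on_delete:
  assumes G: "simple_graph V E"
    and minimal: "\<forall>V' E'. proper_subgraph V' E' V E \<longrightarrow> sq_list_colorable V' E' n"
    and S: "S \<subseteq> V" "S \<noteq> {}" and L: "list_assignment V L n" and A: "A \<subseteq> V - S"
    and S_sep: "\<forall>w\<in>S. \<forall>a\<in>A. \<forall>b\<in>A. {a, w} \<in> E \<longrightarrow> {w, b} \<in> E \<longrightarrow> a = b"
  shows "\<exists>c. sq_coloring_on V E L A c"
proof -
  define V' where "V' = V - S"
  define E' where "E' = {e\<in>E. e \<subseteq> V'}"
  have "proper_subgraph V' E' V E"
    unfolding proper_subgraph_def V'_def E'_def using S by auto
  then have "sq_list_colorable V' E' n"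
    using minimal by blast
  moreover have "\<forall>v\<in>V'. finite (L v) \<and> card (L v) = n"
    using L unfolding list_assignment_def V'_def by blast
  ultimately obtain c where c: "\<forall>v\<in>V'. c v \<in> L v" "\<forall>u v. sq_adj V' E' u v \<longrightarrow> c u \<noteq> c v"
    unfolding sq_list_colorable_def by blast
  have "sq_adj V' E' a b" if a: "a \<in> A" and b: "b \<in> A" and ab: "sq_adj V E a b" for a b
  proof -
    have "a \<in> V'" "b \<in> V'" "a \<noteq> b"
      using a b A ab unfolding V'_def sq_adj_def by auto
    moreover from ab consider "{a, b} \<in> E" | w where "{a, w} \<in> E" "{w, b} \<in> E"
      unfolding sq_adj_def by blast
    then have "{a, b} \<in> E' \<or> (\<exists>w. {a, w} \<in> E' \<and> {w, b} \<in> E')"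
    proof cases
      case 1
      then show ?thesis using \<open>a \<in> V'\<close> \<open>b \<in> V'\<close> unfolding E'_def by auto
    next
      case 2
      have "w \<notin> S"
        using S_sep a b 2 \<open>a \<noteq> b\<close> by metis
      then have "w \<in> V'"
        using simple_graph_edgeD(2)[OF G 2(1)] unfolding V'_def by blast
      then show ?thesis using 2 \<open>a \<in> V'\<close> \<open>b \<in> V'\<close> unfolding E'_def by auto
    qed
    ultimately show ?thesis
      unfolding sq_adj_def by blast
  qed
  then have "sq_coloring_on V E L A c"
    using c A unfolding sq_coloring_on_def V'_def by (meson DiffD1 subset_iff)
  then show ?thesis by blast
qed

subsection \<open>Reducible configurations in a minimal counterexample\<close>

locale sq_critical =
  fixes V :: "'a set" and E :: "'a set set" and k :: nat
  assumes graph: "simple_graph V E"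
    and max_deg: "\<forall>v\<in>V. deg E v \<le> k"
    and not_colorable: "\<not> sq_list_colorable V E (k + 1)"
    and minimal: "\<forall>V' E'. proper_subgraph V' E' V E \<longrightarrow> sq_list_colorable V' E' (k + 1)"
begin

lemma reducible_set_absent:
  assumes "S \<subseteq> V" "S \<noteq> {}" "A \<subseteq> V - S"
    and "\<forall>w\<in>S. \<forall>a\<in>A. \<forall>b\<in>A. {a, w} \<in> E \<longrightarrow> {w, b} \<in> E \<longrightarrow> a = b"
    and extend: "\<And>L c. list_assignment V L (k + 1) \<Longrightarrow> sq_coloring_on V E L A c \<Longrightarrow>
      \<exists>c'. sq_coloring_on V E L V c'"
  shows False
  using not_colorable sq_list_colorableI extend
    sq_coloring_on_delete[OF graph minimal assms(1,2) _ assms(3,4)]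
  by blast

lemma deg_ge_2:
  assumes u: "u \<in> V"
  shows "2 \<le> deg E u"
proof (rule ccontr)
  assume "\<not> 2 \<le> deg E u"
  then have deg_u: "card (nbrs E u) \<le> 1"
    by (simp add: deg_def)
  show False
  proof (rule reducible_set_absent[of "{u}" "V - {u}"])
    show "\<forall>w\<in>{u}. \<forall>a\<in>V - {u}. \<forall>b\<in>V - {u}. {a, w} \<in> E \<longrightarrow> {w, b} \<in> E \<longrightarrow> a = b"
    proof (intro ballI impI)
      fix w a b assume "w \<in> {u}" "{a, w} \<in> E" "{w, b} \<in> E"
      then have "a \<in> nbrs E u" "b \<in> nbrs E u"
        by (simp_all add: mem_nbrs_iff insert_commute)
      then show "a = b"
        using deg_u card_le_Suc0_iff_eq[OF finite_nbrs[OF graph]] by auto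
    qed
  next
    fix L c
    assume L: "list_assignment V L (k + 1)" and c: "sq_coloring_on V E L (V - {u}) c"
    have "\<forall>w\<in>nbrs E u. real (deg E w) \<le> real k"
      using max_deg nbrs_subset[OF graph] by auto
    then have "real (card {z\<in>V - {u}. sq_adj V E u z}) \<le> real (deg E u) * real k"
      by (rule card_sq_nbrs_le_deg_mult[OF graph])
    also have "\<dots> \<le> 1 * real k"
      using deg_u by (intro mult_right_mono) (simp_all add: deg_def)
    finally have "card {z\<in>V - {u}. sq_adj V E u z} \<le> k"
      by simp
    then obtain c' where "sq_coloring_on V E L (insert u (V - {u})) c'"
      using sq_coloring_on_insert[OF graph L u c] by blast
    moreover have "insert u (V - {u}) = V"
      using u by auto
    ultimately show "\<exists>c'. sq_coloring_on V E L V c'"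
      by metis
  qed (use u in auto)
qed

lemma no_adjacent_deg2_pair:
  assumes distinct: "distinct [w1, u1, u2, w2]"
    and edges: "{w1, u1} \<in> E" "{u1, u2} \<in> E" "{u2, w2} \<in> E"
    and deg: "deg E u1 = 2" "deg E u2 = 2" "deg E w1 + 1 \<le> k" "deg E w2 + 2 \<le> k"
  shows False
proof -
  have in_V: "u1 \<in> V" "u2 \<in> V"
    using simple_graph_edgeD[OF graph edges(2)] by auto
  have adj: "w1 \<in> nbrs E u1" "u2 \<in> nbrs E u1" "u1 \<in> nbrs E u2" "w2 \<in> nbrs E u2"
    "u1 \<in> nbrs E w1" "u2 \<in> nbrs E w2"
    using edges by (simp_all add: mem_nbrs_iff insert_commute)
  have N1: "nbrs E u1 = {w1, u2}"
    using nbrs_eq_doubleton[OF graph deg(1) adj(1,2)] distinct by simp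
  have N2: "nbrs E u2 = {u1, w2}"
    using nbrs_eq_doubleton[OF graph deg(2) adj(3,4)] distinct by simp
  define A where "A = V - {u1, u2}"
  show False
  proof (rule reducible_set_absent[of "{u1, u2}" A])
    show "\<forall>w\<in>{u1, u2}. \<forall>a\<in>A. \<forall>b\<in>A. {a, w} \<in> E \<longrightarrow> {w, b} \<in> E \<longrightarrow> a = b"
    proof (intro ballI impI)
      fix w a b
      assume w: "w \<in> {u1, u2}" and ab: "a \<in> A" "b \<in> A" "{a, w} \<in> E" "{w, b} \<in> E"
      then have "a \<in> nbrs E w" "b \<in> nbrs E w"
        by (simp_all add: mem_nbrs_iff insert_commute)
      then show "a = b"
        using w ab(1,2) N1 N2 unfolding A_def by auto
    qed
  next
    fix L c
    assume L: "list_assignment V L (k + 1)" and c: "sq_coloring_on V E L A c"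
    have "card {z\<in>A. sq_adj V E u1 z}
        \<le> card (insert w1 (nbrs E w1 - {u1}) \<inter> A) + card (insert u2 (nbrs E u2 - {u1}) \<inter> A)"
      using card_sq_nbrs_le_sum[OF graph, of A u1] N1 distinct by simp
    also have "\<dots> \<le> deg E w1 + (deg E u2 - 1)"
      using card_insert_nbrs_le_deg[OF graph adj(5), of A]
        card_insert_nbrs_le_deg(2)[OF graph adj(3), of A]
      unfolding A_def by (intro add_mono) auto
    finally have "card {z\<in>A. sq_adj V E u1 z} \<le> k"
      using deg by linarith
    then obtain c1 where c1: "sq_coloring_on V E L (insert u1 A) c1"
      using sq_coloring_on_insert[OF graph L in_V(1) c] by blast
    have "card {z\<in>insert u1 A. sq_adj V E u2 z}
        \<le> card (insert u1 (nbrs E u1 - {u2}) \<inter> insert u1 A)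
          + card (insert w2 (nbrs E w2 - {u2}) \<inter> insert u1 A)"
      using card_sq_nbrs_le_sum[OF graph, of "insert u1 A" u2] N2 distinct by simp
    also have "\<dots> \<le> deg E u1 + deg E w2"
      using card_insert_nbrs_le_deg(1)[OF graph adj(2)] card_insert_nbrs_le_deg(1)[OF graph adj(6)]
      by (rule add_mono)
    finally have "card {z\<in>insert u1 A. sq_adj V E u2 z} \<le> k"
      using deg by linarith
    then obtain c2 where "sq_coloring_on V E L (insert u2 (insert u1 A)) c2"
      using sq_coloring_on_insert[OF graph L in_V(2) c1] by blast
    moreover have "insert u2 (insert u1 A) = V"
      using in_V unfolding A_def by auto
    ultimately show "\<exists>c'. sq_coloring_on V E L V c'"
      by metis
  qed (use in_V A_def in auto)
qed

lemma no_light_vertex_with_deg2_spokes: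
  fixes M :: real
  assumes M: "2 * M \<le> real k"
    and u: "u \<in> V" "3 \<le> deg E u" "real (deg E u) \<le> M"
    and xy: "x \<noteq> y" "x \<in> nbrs E u" "y \<in> nbrs E u"
    and spokes: "\<forall>v \<in> nbrs E u - {x, y}. deg E v = 2 \<and>
      (\<forall>w. {v, w} \<in> E \<and> w \<noteq> u \<longrightarrow> real (deg E w) \<le> M)"
    and xy_deg: "real (deg E x) + real (deg E y) \<le> real k - M + 2"
  shows False
proof -
  define S where "S = nbrs E u - {x, y}"
  define A where "A = V - insert u S"
  have S_V: "S \<subseteq> V"
    using nbrs_subset[OF graph] unfolding S_def by blast
  have card_S: "card S = deg E u - 2"
    unfolding S_def deg_def using xy finite_nbrs[OF graph] by (simp add: card_Diff_subset)
  have u_nbr: "u \<in> nbrs E v" if "v \<in> S" for v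
    using that unfolding S_def by (simp add: nbrs_commute)
  have other_nbr_unique: "a = b" if "v \<in> S" "a \<in> nbrs E v - {u}" "b \<in> nbrs E v - {u}" for v a b
  proof -
    have "nbrs E v = {u, a}"
      using nbrs_eq_doubleton[OF graph _ u_nbr[OF that(1)]] spokes that(1,2) unfolding S_def by auto
    then show ?thesis
      using that(3) by auto
  qed
  show False
  proof (rule reducible_set_absent[of S A])
    show "\<forall>w\<in>S. \<forall>a\<in>A. \<forall>b\<in>A. {a, w} \<in> E \<longrightarrow> {w, b} \<in> E \<longrightarrow> a = b"
    proof (intro ballI impI)
      fix w a b
      assume w: "w \<in> S" and ab: "a \<in> A" "b \<in> A" "{a, w} \<in> E" "{w, b} \<in> E"
      then have "a \<in> nbrs E w - {u}" "b \<in> nbrs E w - {u}"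
        unfolding A_def by (auto simp: mem_nbrs_iff insert_commute)
      then show "a = b"
        by (rule other_nbr_unique[OF w])
    qed
  next
    fix L c
    assume L: "list_assignment V L (k + 1)" and c: "sq_coloring_on V E L A c"
    let ?t = "\<lambda>w. card (insert w (nbrs E w - {u}) \<inter> A)"
    have "card {z\<in>A. sq_adj V E u z} \<le> (\<Sum>w\<in>nbrs E u. ?t w)"
      by (rule card_sq_nbrs_le_sum[OF graph])
    also have "\<dots> = (\<Sum>w\<in>S. ?t w) + (\<Sum>w\<in>{x, y}. ?t w)"
      unfolding S_def using finite_nbrs[OF graph] xy by (intro sum.subset_diff) auto
    also have "\<dots> \<le> (\<Sum>w\<in>S. deg E w - 1) + (deg E x + deg E y)"
    proof (intro add_mono sum_mono)
      show "?t w \<le> deg E w - 1" if "w \<in> S" for w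
        by (rule card_insert_nbrs_le_deg(2)[OF graph u_nbr[OF that]]) (simp add: A_def that)
      have "u \<in> nbrs E x" "u \<in> nbrs E y"
        using xy(2,3) by (simp_all add: nbrs_commute)
      then show "(\<Sum>w\<in>{x, y}. ?t w) \<le> deg E x + deg E y"
        using xy(1) card_insert_nbrs_le_deg(1)[OF graph] by (simp add: add_mono)
    qed
    also have "(\<Sum>w\<in>S. deg E w - 1) = (\<Sum>w\<in>S. 1)"
      using spokes unfolding S_def by (intro sum.cong) auto
    finally have "real (card {z\<in>A. sq_adj V E u z}) \<le> real (deg E u - 2) + real (deg E x) + real (deg E y)"
      using card_S by simp
    also have "\<dots> \<le> real k"
      using u(2,3) xy_deg by (simp add: of_nat_diff)
    finally have "card {z\<in>A. sq_adj V E u z} \<le> k"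
      by simp
    then obtain c1 where c1: "sq_coloring_on V E L (insert u A) c1"
      using sq_coloring_on_insert[OF graph L u(1) c] by blast
    have "card {z\<in>V. sq_adj V E s z} \<le> k" if s: "s \<in> S" for s
    proof -
      have "real (deg E w) \<le> M" if "w \<in> nbrs E s" for w
      proof (cases "w = u")
        case False
        have "{s, w} \<in> E"
          using that by (simp add: mem_nbrs_iff insert_commute)
        then show ?thesis
          using spokes s False unfolding S_def by blast
      qed (use u(3) in simp)
      then have "real (card {z\<in>V. sq_adj V E s z}) \<le> real (deg E s) * M"
        using card_sq_nbrs_le_deg_mult[OF graph] by blast
      also have "\<dots> = 2 * M"
        using spokes s unfolding S_def by simp
      finally show ?thesis
        using M by linarith
    qed
    then obtain c2 where "sq_coloring_on V E L (insert u A \<union> S) c2"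
      using sq_coloring_on_Un[OF graph L S_V _ _ c1] u(1) unfolding A_def by blast
    moreover have "insert u A \<union> S = V"
      using u(1) S_V unfolding A_def by auto
    ultimately show "\<exists>c'. sq_coloring_on V E L V c'"
      by metis
  qed (use S_V card_S u(2) A_def in auto)
qed

end

theorem lemma2:
  fixes V :: "'a set" and E :: "'a set set" and k :: nat and \<epsilon> M :: real
  assumes eps: "0 < \<epsilon>" "\<epsilon> \<le> 1/20"
    and M_def: "M = 6 / \<epsilon>"
    and k_ge: "real k \<ge> 3 / \<epsilon>\<^sup>2"
    and G: "simple_graph V E"
    and maxdeg: "\<forall>v\<in>V. deg E v \<le> k"
    and not_col: "\<not> sq_list_colorable V E (k + 1)"
    and minimal: "\<forall>V' E'. proper_subgraph V' E' V E \<longrightarrow> sq_list_colorable V' E' (k + 1)"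
  shows "(\<forall>u\<in>V. deg E u \<ge> 2)
    \<and> \<not> (\<exists>w1 u1 u2 w2. distinct [w1, u1, u2, w2] \<and>
           {w1, u1} \<in> E \<and> {u1, u2} \<in> E \<and> {u2, w2} \<in> E \<and>
           deg E u1 = 2 \<and> deg E u2 = 2 \<and>
           deg E w1 + 1 \<le> k \<and> deg E w2 + 2 \<le> k)
    \<and> \<not> (\<exists>u x y. u \<in> V \<and> 3 \<le> deg E u \<and> real (deg E u) \<le> M \<and>
           x \<noteq> y \<and> x \<in> nbrs E u \<and> y \<in> nbrs E u \<and>
           (\<forall>v \<in> nbrs E u - {x, y}. deg E v = 2 \<and>
               (\<forall>w. {v, w} \<in> E \<and> w \<noteq> u \<longrightarrow> real (deg E w) \<le> M)) \<and>
           real (deg E x) + real (deg E y) \<le> real k - M + 2)"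
proof -
  interpret sq_critical V E k
    using G maxdeg not_col minimal by unfold_locales
  have "2 * M = 12 / \<epsilon>"
    using M_def by simp
  also have "\<dots> \<le> 3 / \<epsilon>\<^sup>2"
    using eps by (simp add: field_simps power2_eq_square)
  finally have M: "2 * M \<le> real k"
    using k_ge by linarith
  show ?thesis
  proof (intro conjI notI ballI)
    show "2 \<le> deg E u" if "u \<in> V" for u
      using deg_ge_2[OF that] .
  next
    assume "\<exists>w1 u1 u2 w2. distinct [w1, u1, u2, w2] \<and>
      {w1, u1} \<in> E \<and> {u1, u2} \<in> E \<and> {u2, w2} \<in> E \<and>
      deg E u1 = 2 \<and> deg E u2 = 2 \<and> deg E w1 + 1 \<le> k \<and> deg E w2 + 2 \<le> k"
    then show False
      using no_adjacent_deg2_pair by blast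
  next
    assume "\<exists>u x y. u \<in> V \<and> 3 \<le> deg E u \<and> real (deg E u) \<le> M \<and>
      x \<noteq> y \<and> x \<in> nbrs E u \<and> y \<in> nbrs E u \<and>
      (\<forall>v \<in> nbrs E u - {x, y}. deg E v = 2 \<and>
        (\<forall>w. {v, w} \<in> E \<and> w \<noteq> u \<longrightarrow> real (deg E w) \<le> M)) \<and>
      real (deg E x) + real (deg E y) \<le> real k - M + 2"
    then show False
      using no_light_vertex_with_deg2_spokes[OF M] by blast
  qed
qed

end
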